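(* Let $(G,M,I)$ be a finite formal context and let $(H_0(\mathcal F_k))_{k\ge 0}$ be the chain complex obtained by taking zeroth cellular cosheaf homology of each cosheaf $\mathcal F_k:\sigma\mapsto C_k(\Delta[\sigma'])$ on $D(G,M,I)$, with differentials induced by the simplicial boundary maps. Then the homology of this chain complex in degree $k$ is isomorphic to the real simplicial homology $H_k(D(M,G,I^T);\mathbb R)$ of the dual Dowker complex, for every $k\ge 0$.
   Context: A formal context is a triple $(G,M,I)$ with $I\subseteq G\times M$; for $A\subseteq G$, $A'=\{m: gIm\ \forall g\in A\}$, for $B\subseteq M$, $B'=\{g: gIm\ \forall m\in B\}$. The Dowker complex $D(G,M,I)$ is the abstract simplicial complex on $G$ whose simplices are the nonempty $\sigma\subseteq G$ with $\sigma'\ne\emptyset$; $D(M,G,I^T)$ is the abstract simplicial complex on $M$ whose simplices are the nonempty $S\subseteq M$ with $S'\neq\emptyset$. $C_k(\Delta[S])$ is the space of real oriented simplicial $k$-chains of the full simplex on $S$; for $\sigma\subseteq\tau$ the extension $\mathcal F_k(\tau)\to\mathcal F_k(\sigma)$ is induced by $\tau'\subseteq\sigma'$. Cellular cosheaf homology of a cosheaf $\mathcal F$ on $D(G,M,I)$ is the homology of $C_j=\bigoplus_{\dim\tau=j}\mathcal F(\tau)$ with $\partial_j x=\sum_{i}(-1)^i\mathcal F(\tau_i\subseteq\tau)(x)$ ($\tau_i$ the face omitting the $i$-th vertex in a fixed order), and $H_0=C_0/\partial_1C_1$. *)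

theory Defs
  imports "HOL-Analysis.Analysis"
begin

definition deriv :: "'x set \<Rightarrow> 'y set \<Rightarrow> ('x \<times> 'y) set \<Rightarrow> 'x set \<Rightarrow> 'y set" where
  "deriv X Y R A = {y \<in> Y. \<forall>x\<in>A. (x, y) \<in> R}"

definition dowker :: "'x set \<Rightarrow> 'y set \<Rightarrow> ('x \<times> 'y) set \<Rightarrow> 'x set set" where
  "dowker X Y R = {\<sigma>. \<sigma> \<noteq> {} \<and> \<sigma> \<subseteq> X \<and> deriv X Y R \<sigma> \<noteq> {}}"

(* Real oriented k-chains of a simplicial complex K (a set of simplices), in the
   basis of simplices oriented by the increasing order of their vertices:
   a chain is a real coefficient for each k-simplex (card = k+1). *)
definition chains :: "'a set set \<Rightarrow> nat \<Rightarrow> ('a set \<Rightarrow> real) set" where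
  "chains K k = {c. \<forall>\<sigma>. c \<sigma> \<noteq> 0 \<longrightarrow> \<sigma> \<in> K \<and> card \<sigma> = k + 1}"

definition full_simplex :: "'a set \<Rightarrow> 'a set set" where
  "full_simplex S = {\<sigma>. \<sigma> \<noteq> {} \<and> \<sigma> \<subseteq> S}"

(* Simplicial boundary on chains over the finite vertex set V:
   (\<partial>c)(\<tau>) = \<Sum> over simplices \<tau> \<union> {v}, with sign (-1)^i where i is the
   position of v in the increasing ordering of \<tau> \<union> {v}.
   (Only meaningful in degrees k \<ge> 1; \<partial>_0 is taken to be 0 separately.) *)
definition bd :: "'a::linorder set \<Rightarrow> ('a set \<Rightarrow> real) \<Rightarrow> ('a set \<Rightarrow> real)" where
  "bd V c = (\<lambda>\<tau>. \<Sum>v\<in>V - \<tau>. (-1) ^ card {w\<in>\<tau>. w < v} * c (insert v \<tau>))"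

(* Simplicial homology H_k(K;R) presented as a subquotient Z/B of the chain space *)
definition cycles :: "'a::linorder set \<Rightarrow> 'a set set \<Rightarrow> nat \<Rightarrow> ('a set \<Rightarrow> real) set" where
  "cycles V K k = {c \<in> chains K k. k = 0 \<or> bd V c = (\<lambda>_. 0)}"

definition boundaries :: "'a::linorder set \<Rightarrow> 'a set set \<Rightarrow> nat \<Rightarrow> ('a set \<Rightarrow> real) set" where
  "boundaries V K k = bd V ` chains K (k + 1)"

(* Cosheaf F_k : \<sigma> \<mapsto> C_k(\<Delta>[\<sigma>']) on D(G,M,I).  The j-th cellular chain group
   \<Oplus>_{dim \<sigma> = j} F_k(\<sigma>) is represented by functions x with x \<sigma> \<in> C_k(\<Delta>[\<sigma>']). *)
definition cosheaf_chains ::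
  "'g set \<Rightarrow> 'm set \<Rightarrow> ('g \<times> 'm) set \<Rightarrow> nat \<Rightarrow> nat \<Rightarrow> ('g set \<Rightarrow> 'm set \<Rightarrow> real) set" where
  "cosheaf_chains G M I k j =
     {x. \<forall>\<sigma>. (x \<sigma> \<noteq> (\<lambda>_. 0) \<longrightarrow> \<sigma> \<in> dowker G M I \<and> card \<sigma> = j + 1)
            \<and> x \<sigma> \<in> chains (full_simplex (deriv G M I \<sigma>)) k}"

(* Cellular cosheaf boundary: the extension maps F_k(\<tau>) \<rightarrow> F_k(\<sigma>) for \<sigma> \<subseteq> \<tau>
   are the inclusions C_k(\<Delta>[\<tau>']) \<subseteq> C_k(\<Delta>[\<sigma>']); the face \<sigma> = \<tau> - {g} of
   \<tau> omits the i-th vertex, i = position of g in \<tau> (increasing order). *)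
definition cosheaf_bd ::
  "'g::linorder set \<Rightarrow> ('g set \<Rightarrow> 'm set \<Rightarrow> real) \<Rightarrow> ('g set \<Rightarrow> 'm set \<Rightarrow> real)" where
  "cosheaf_bd G x = (\<lambda>\<sigma> \<rho>. \<Sum>g\<in>G - \<sigma>. (-1) ^ card {w\<in>\<sigma>. w < g} * x (insert g \<sigma>) \<rho>)"

(* Map H_0(F_k) \<rightarrow> H_0(F_{k-1}) induced by the simplicial boundary, on representatives *)
definition cosheaf_d ::
  "'m::linorder set \<Rightarrow> ('g set \<Rightarrow> 'm set \<Rightarrow> real) \<Rightarrow> ('g set \<Rightarrow> 'm set \<Rightarrow> real)" where
  "cosheaf_d M x = (\<lambda>\<sigma>. bd M (x \<sigma>))"

(* The degree-k homology of the complex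
   (H_0(F_k), d_k) is ker d_k / im d_{k+1}; in terms of representatives in
   C_0(F_k) this is the subquotient Z/B below (third isomorphism theorem
   applied to the quotient by \<partial>_1 C_1(F_k)). *)
definition H0_cycles ::
  "'g::linorder set \<Rightarrow> 'm::linorder set \<Rightarrow> ('g \<times> 'm) set \<Rightarrow> nat \<Rightarrow> ('g set \<Rightarrow> 'm set \<Rightarrow> real) set" where
  "H0_cycles G M I k =
     {x \<in> cosheaf_chains G M I k 0.
        k = 0 \<or> cosheaf_d M x \<in> cosheaf_bd G ` cosheaf_chains G M I (k - 1) 1}"

definition H0_boundaries ::
  "'g::linorder set \<Rightarrow> 'm::linorder set \<Rightarrow> ('g \<times> 'm) set \<Rightarrow> nat \<Rightarrow> ('g set \<Rightarrow> 'm set \<Rightarrow> real) set" where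
  "H0_boundaries G M I k =
     {(\<lambda>\<sigma> \<rho>. a \<sigma> \<rho> + b \<sigma> \<rho>) | a b.
        a \<in> cosheaf_bd G ` cosheaf_chains G M I k 1 \<and>
        b \<in> cosheaf_d M ` cosheaf_chains G M I (k + 1) 0}"

(* Isomorphism of real vector spaces Z/B \<cong> Z'/B' (B \<subseteq> Z subspaces of the pointwise
   real vector space 'g set \<Rightarrow> 'm set \<Rightarrow> real, B' \<subseteq> Z' subspaces of 'a set \<Rightarrow> real):
   a real-linear map f with f(Z) \<subseteq> Z' inducing a bijection Z/B \<rightarrow> Z'/B'. *)
definition subquot_iso ::
  "('g set \<Rightarrow> 'm set \<Rightarrow> real) set \<Rightarrow> ('g set \<Rightarrow> 'm set \<Rightarrow> real) set \<Rightarrow>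
   ('a set \<Rightarrow> real) set \<Rightarrow> ('a set \<Rightarrow> real) set \<Rightarrow> bool" where
  "subquot_iso Z B Z' B' \<longleftrightarrow>
     (\<exists>f. (\<forall>x y. f (\<lambda>\<sigma> \<rho>. x \<sigma> \<rho> + y \<sigma> \<rho>) = (\<lambda>\<tau>. f x \<tau> + f y \<tau>))
        \<and> (\<forall>c x. f (\<lambda>\<sigma> \<rho>. c * x \<sigma> \<rho>) = (\<lambda>\<tau>. c * f x \<tau>))
        \<and> f ` Z \<subseteq> Z'
        \<and> (\<forall>z\<in>Z. f z \<in> B' \<longleftrightarrow> z \<in> B)
        \<and> (\<forall>z'\<in>Z'. \<exists>z\<in>Z. (\<lambda>\<tau>. f z \<tau> - z' \<tau>) \<in> B'))"

end

theory Submission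
  imports Defs
begin

text \<open>Summing a 0-chain of \<open>\<F>\<^sub>k\<close> over the vertices of \<open>D(G,M,I)\<close> gives an augmentation
  \<open>C\<^sub>0(\<F>\<^sub>k) \<rightarrow> C\<^sub>k(D(M,G,I\<^sup>T))\<close>; it is onto, kills \<open>\<partial>\<^sub>1 C\<^sub>1(\<F>\<^sub>k)\<close> and turns the differential
  induced by the simplicial boundary into the simplicial boundary.  Its kernel is exactly
  \<open>\<partial>\<^sub>1 C\<^sub>1(\<F>\<^sub>k)\<close>: the coefficients at a fixed \<open>k\<close>-simplex \<open>\<tau>\<close> live on the vertices of \<open>\<tau>'\<close>,
  which span a full simplex, so when they sum to zero they form the boundary of an explicit
  1-chain obtained by averaging.  Thus \<open>H\<^sub>0(\<F>\<^sub>k) \<cong> C\<^sub>k(D(M,G,I\<^sup>T))\<close> as chain complexes and the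
  homologies agree.\<close>

lemma sum_sum_antisym_eq_0:
  fixes F :: "'a \<Rightarrow> 'a \<Rightarrow> 'b::linordered_ab_group_add"
  assumes "finite A" and antisym: "\<And>a b. a \<noteq> b \<Longrightarrow> F a b = - F b a"
  shows "(\<Sum>a\<in>A. \<Sum>b\<in>A - {a}. F a b) = 0"
proof -
  have "(\<Sum>a\<in>A. \<Sum>b\<in>A - {a}. F a b) = (\<Sum>a\<in>A. \<Sum>b\<in>{b\<in>A. a \<noteq> b}. F a b)"
    by (intro sum.cong) auto
  also have "\<dots> = (\<Sum>b\<in>A. \<Sum>a\<in>{a\<in>A. a \<noteq> b}. F a b)"
    by (rule sum.swap_restrict[OF assms(1) assms(1)])
  also have "\<dots> = (\<Sum>b\<in>A. \<Sum>a\<in>A - {b}. - F b a)"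
    by (intro sum.cong) (auto simp: antisym)
  also have "\<dots> = - (\<Sum>b\<in>A. \<Sum>a\<in>A - {b}. F b a)"
    by (simp add: sum_negf)
  finally show ?thesis
    by simp
qed

lemma sum_diff_average_eq:
  fixes f :: "'a \<Rightarrow> real"
  assumes "finite S" and "a \<in> S" and "(\<Sum>b\<in>S. f b) = 0"
  shows "(\<Sum>b\<in>S - {a}. (f a - f b) / card S) = f a"
proof -
  have "card S \<ge> 1"
    using assms(1,2) by (metis One_nat_def Suc_leI card_gt_0_iff empty_iff)
  have "(\<Sum>b\<in>S - {a}. f a - f b) = card (S - {a}) * f a - (\<Sum>b\<in>S - {a}. f b)"
    by (simp add: sum_subtractf)
  also have "\<dots> = card S * f a"
    using assms \<open>card S \<ge> 1\<close> by (simp add: card_Diff_singleton of_nat_diff sum_diff1 algebra_simps)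
  finally have "(\<Sum>b\<in>S - {a}. f a - f b) = card S * f a" .
  then show ?thesis
    using \<open>card S \<ge> 1\<close> by (simp add: sum_divide_distrib[symmetric])
qed

lemma card_less_singleton: "card {x \<in> {a}. x < b} = (if a < b then 1 else 0)"
proof -
  have "{x \<in> {a}. x < b} = (if a < b then {a} else {})"
    by auto
  then show ?thesis
    by simp
qed

definition augmentation :: "'g set \<Rightarrow> ('g set \<Rightarrow> 'm set \<Rightarrow> real) \<Rightarrow> 'm set \<Rightarrow> real" where
  "augmentation G x = (\<lambda>\<rho>. \<Sum>g\<in>G. x {g} \<rho>)"

lemma augmentation_add:
  "augmentation G (\<lambda>\<sigma> \<rho>. x \<sigma> \<rho> + y \<sigma> \<rho>) = (\<lambda>\<rho>. augmentation G x \<rho> + augmentation G y \<rho>)"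
  by (simp add: augmentation_def sum.distrib)

lemma augmentation_diff:
  "augmentation G (\<lambda>\<sigma> \<rho>. x \<sigma> \<rho> - y \<sigma> \<rho>) = (\<lambda>\<rho>. augmentation G x \<rho> - augmentation G y \<rho>)"
  by (simp add: augmentation_def sum_subtractf)

lemma augmentation_scale:
  "augmentation G (\<lambda>\<sigma> \<rho>. c * x \<sigma> \<rho>) = (\<lambda>\<rho>. c * augmentation G x \<rho>)"
  by (simp add: augmentation_def sum_distrib_left)

lemma augmentation_cosheaf_bd:
  assumes "finite G"
  shows "augmentation G (cosheaf_bd G a) = (\<lambda>_. 0)"
proof
  fix \<rho>
  have "(-1) ^ card {x \<in> {g}. x < h} * a (insert h {g}) \<rho>
      = - ((-1) ^ card {x \<in> {h}. x < g} * a (insert g {h}) \<rho>)" if "g \<noteq> h" for g h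
    using that unfolding card_less_singleton by (cases "g < h") (auto simp: insert_commute)
  then show "augmentation G (cosheaf_bd G a) \<rho> = 0"
    unfolding augmentation_def cosheaf_bd_def by (rule sum_sum_antisym_eq_0[OF assms])
qed

lemma augmentation_cosheaf_d: "augmentation G (cosheaf_d M x) = bd M (augmentation G x)"
  unfolding augmentation_def cosheaf_d_def bd_def sum_distrib_left by (rule ext, rule sum.swap)

lemma cosheaf_chains_iff:
  "x \<in> cosheaf_chains G M I k j \<longleftrightarrow>
     (\<forall>\<sigma>. x \<sigma> \<noteq> (\<lambda>_. 0) \<longrightarrow> \<sigma> \<in> dowker G M I \<and> card \<sigma> = j + 1) \<and>
     (\<forall>\<sigma> \<rho>. x \<sigma> \<rho> \<noteq> 0 \<longrightarrow> \<rho> \<in> full_simplex (deriv G M I \<sigma>) \<and> card \<rho> = k + 1)"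
  unfolding cosheaf_chains_def chains_def mem_Collect_eq all_conj_distrib by (rule refl)

lemma augmentation_in_chains:
  assumes "x \<in> cosheaf_chains G M I k 0"
  shows "augmentation G x \<in> chains (dowker M G (converse I)) k"
  unfolding chains_def
proof (intro CollectI allI impI)
  fix \<rho> assume "augmentation G x \<rho> \<noteq> 0"
  then obtain g where g: "g \<in> G" "x {g} \<rho> \<noteq> 0"
    unfolding augmentation_def by (meson sum.neutral)
  with assms have "\<rho> \<in> full_simplex (deriv G M I {g})" "card \<rho> = k + 1"
    unfolding cosheaf_chains_iff by auto
  with g show "\<rho> \<in> dowker M G (converse I) \<and> card \<rho> = k + 1"
    unfolding full_simplex_def dowker_def deriv_def by auto
qed

lemma cosheaf_chains_diff:
  assumes "x \<in> cosheaf_chains G M I k j" and "y \<in> cosheaf_chains G M I k j"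
  shows "(\<lambda>\<sigma> \<rho>. x \<sigma> \<rho> - y \<sigma> \<rho>) \<in> cosheaf_chains G M I k j"
proof -
  have "x \<sigma> \<noteq> (\<lambda>_. 0) \<or> y \<sigma> \<noteq> (\<lambda>_. 0)" if "(\<lambda>\<rho>. x \<sigma> \<rho> - y \<sigma> \<rho>) \<noteq> (\<lambda>_. 0)" for \<sigma>
    using that by (auto simp: fun_eq_iff)
  moreover have "x \<sigma> \<rho> \<noteq> 0 \<or> y \<sigma> \<rho> \<noteq> 0" if "x \<sigma> \<rho> - y \<sigma> \<rho> \<noteq> 0" for \<sigma> \<rho>
    using that by auto
  ultimately show ?thesis
    using assms unfolding cosheaf_chains_iff by blast
qed

lemma cosheaf_d_in_cosheaf_chains:
  assumes "x \<in> cosheaf_chains G M I (k + 1) j"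
  shows "cosheaf_d M x \<in> cosheaf_chains G M I k j"
  unfolding cosheaf_chains_iff
proof (intro conjI allI impI)
  fix \<sigma> assume "cosheaf_d M x \<sigma> \<noteq> (\<lambda>_. 0)"
  then have "x \<sigma> \<noteq> (\<lambda>_. 0)"
    unfolding cosheaf_d_def bd_def by auto
  with assms show "\<sigma> \<in> dowker G M I" "card \<sigma> = j + 1"
    unfolding cosheaf_chains_iff by auto
next
  fix \<sigma> \<tau> assume "cosheaf_d M x \<sigma> \<tau> \<noteq> 0"
  then have "\<exists>v\<in>M - \<tau>. x \<sigma> (insert v \<tau>) \<noteq> 0"
    unfolding cosheaf_d_def bd_def by (force intro: sum.neutral)
  then obtain v where v: "v \<in> M - \<tau>" "x \<sigma> (insert v \<tau>) \<noteq> 0" ..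
  with assms have vt: "insert v \<tau> \<in> full_simplex (deriv G M I \<sigma>)" "card (insert v \<tau>) = k + 2"
    unfolding cosheaf_chains_iff by auto
  then have "finite (insert v \<tau>)"
    by (intro card_ge_0_finite) simp
  then have "finite \<tau>"
    by simp
  with v vt show "\<tau> \<in> full_simplex (deriv G M I \<sigma>)" "card \<tau> = k + 1"
    unfolding full_simplex_def by auto
qed

lemma dowker_simplex_if_subset_deriv:
  assumes "\<sigma> \<noteq> {}" and "\<tau> \<noteq> {}" and "\<tau> \<subseteq> M" and "\<sigma> \<subseteq> deriv M G (converse I) \<tau>"
  shows "\<sigma> \<in> dowker G M I" and "\<tau> \<in> full_simplex (deriv G M I \<sigma>)"
  using assms unfolding dowker_def full_simplex_def deriv_def by blast+

lemma cosheaf_chains_0_support: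
  assumes "w \<in> cosheaf_chains G M I k 0" and "w \<sigma> \<tau> \<noteq> 0"
  shows "\<exists>g. \<sigma> = {g} \<and> g \<in> deriv M G (converse I) \<tau> \<and> \<tau> \<noteq> {} \<and> \<tau> \<subseteq> M \<and> card \<tau> = k + 1"
proof -
  from assms(2) have "w \<sigma> \<noteq> (\<lambda>_. 0)"
    by auto
  with assms have "\<sigma> \<in> dowker G M I" "card \<sigma> = 1"
    "\<tau> \<in> full_simplex (deriv G M I \<sigma>)" "card \<tau> = k + 1"
    unfolding cosheaf_chains_iff by auto
  then show ?thesis
    unfolding full_simplex_def deriv_def dowker_def by (auto simp: card_1_singleton_iff)
qed

text \<open>The coefficient of \<open>c\<close> at \<open>\<rho>\<close> is placed on a chosen vertex of \<open>\<rho>'\<close>; the choice is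
  irrelevant (and \<open>\<rho>'\<close> nonempty) wherever \<open>c \<rho> \<noteq> 0\<close>.\<close>
definition lift_chain ::
  "'g set \<Rightarrow> 'm set \<Rightarrow> ('g \<times> 'm) set \<Rightarrow> ('m set \<Rightarrow> real) \<Rightarrow> 'g set \<Rightarrow> 'm set \<Rightarrow> real" where
  "lift_chain G M I c = (\<lambda>\<sigma> \<rho>. if \<sigma> = {SOME g. g \<in> deriv M G (converse I) \<rho>} then c \<rho> else 0)"

lemma lift_chain_support:
  assumes "c \<in> chains (dowker M G (converse I)) k" and "lift_chain G M I c \<sigma> \<rho> \<noteq> 0"
  shows "\<exists>g. \<sigma> = {g} \<and> g \<in> deriv M G (converse I) \<rho> \<and> \<rho> \<noteq> {} \<and> \<rho> \<subseteq> M \<and> card \<rho> = k + 1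
           \<and> c \<rho> \<noteq> 0"
proof -
  from assms have "\<sigma> = {SOME g. g \<in> deriv M G (converse I) \<rho>}" "c \<rho> \<noteq> 0"
    unfolding lift_chain_def by (auto split: if_splits)
  moreover from \<open>c \<rho> \<noteq> 0\<close> assms(1) have "\<rho> \<in> dowker M G (converse I)" "card \<rho> = k + 1"
    unfolding chains_def by auto
  moreover from this(1) have "(SOME g. g \<in> deriv M G (converse I) \<rho>) \<in> deriv M G (converse I) \<rho>"
    unfolding dowker_def by (auto intro: someI_ex)
  ultimately show ?thesis
    unfolding dowker_def by auto
qed

lemma lift_chain_in_cosheaf_chains:
  assumes "c \<in> chains (dowker M G (converse I)) k"
  shows "lift_chain G M I c \<in> cosheaf_chains G M I k 0"
  unfolding cosheaf_chains_iff
proof (intro conjI allI impI)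
  fix \<sigma> assume "lift_chain G M I c \<sigma> \<noteq> (\<lambda>_. 0)"
  then obtain \<rho> where "lift_chain G M I c \<sigma> \<rho> \<noteq> 0"
    by auto
  from lift_chain_support[OF assms this] obtain g
    where "\<sigma> = {g}" "\<sigma> \<subseteq> deriv M G (converse I) \<rho>" "\<rho> \<noteq> {}" "\<rho> \<subseteq> M"
    by auto
  then show "\<sigma> \<in> dowker G M I" "card \<sigma> = 0 + 1"
    using dowker_simplex_if_subset_deriv(1)[of \<sigma> \<rho> M G I] by auto
next
  fix \<sigma> \<rho> assume "lift_chain G M I c \<sigma> \<rho> \<noteq> 0"
  from lift_chain_support[OF assms this] obtain g
    where "\<sigma> = {g}" "\<sigma> \<subseteq> deriv M G (converse I) \<rho>" "\<rho> \<noteq> {}" "\<rho> \<subseteq> M" "card \<rho> = k + 1"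
    by auto
  then show "\<rho> \<in> full_simplex (deriv G M I \<sigma>)" "card \<rho> = k + 1"
    using dowker_simplex_if_subset_deriv(2)[of \<sigma> \<rho> M G I] by auto
qed

lemma augmentation_lift_chain:
  assumes "finite G" and "c \<in> chains (dowker M G (converse I)) k"
  shows "augmentation G (lift_chain G M I c) = c"
proof
  fix \<rho>
  show "augmentation G (lift_chain G M I c) \<rho> = c \<rho>"
  proof (cases "c \<rho> = 0")
    case True
    then show ?thesis
      unfolding augmentation_def lift_chain_def by (auto intro: sum.neutral)
  next
    case False
    define g where "g = (SOME g. g \<in> deriv M G (converse I) \<rho>)"
    from False have "lift_chain G M I c {g} \<rho> \<noteq> 0"
      unfolding lift_chain_def g_def by simp
    from lift_chain_support[OF assms(2) this] have "g \<in> G"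
      unfolding deriv_def by auto
    moreover have "lift_chain G M I c {h} \<rho> = (if h = g then c \<rho> else 0)" for h
      unfolding lift_chain_def g_def by simp
    ultimately show ?thesis
      unfolding augmentation_def using assms(1) by simp
  qed
qed

text \<open>A 1-chain of \<open>\<F>\<^sub>k\<close> whose boundary is a given 0-chain \<open>w\<close> of total coefficient zero: at each
  \<open>\<tau>\<close>, the edge \<open>{g, h}\<close>, \<open>g < h\<close>, of the simplex \<open>\<tau>'\<close> carries \<open>(w\<^sub>h - w\<^sub>g) / |\<tau>'|\<close>.\<close>
definition contraction ::
  "'g::linorder set \<Rightarrow> 'm set \<Rightarrow> ('g \<times> 'm) set \<Rightarrow> ('g set \<Rightarrow> 'm set \<Rightarrow> real) \<Rightarrow> 'g set \<Rightarrow> 'm set \<Rightarrow> real"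
where
  "contraction G M I w = (\<lambda>\<sigma> \<tau>. if card \<sigma> = 2 \<and> \<sigma> \<subseteq> deriv M G (converse I) \<tau>
     then (w {Max \<sigma>} \<tau> - w {Min \<sigma>} \<tau>) / card (deriv M G (converse I) \<tau>) else 0)"

lemma contraction_in_cosheaf_chains:
  assumes "w \<in> cosheaf_chains G M I k 0"
  shows "contraction G M I w \<in> cosheaf_chains G M I k 1"
proof -
  have support: "card \<sigma> = 2 \<and> \<sigma> \<subseteq> deriv M G (converse I) \<tau> \<and> \<tau> \<noteq> {} \<and> \<tau> \<subseteq> M \<and> card \<tau> = k + 1"
    if "contraction G M I w \<sigma> \<tau> \<noteq> 0" for \<sigma> \<tau>
  proof -
    from that have "card \<sigma> = 2" "\<sigma> \<subseteq> deriv M G (converse I) \<tau>"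
      and "w {Max \<sigma>} \<tau> \<noteq> 0 \<or> w {Min \<sigma>} \<tau> \<noteq> 0"
      unfolding contraction_def by (auto split: if_splits)
    moreover from this(3) obtain g where "w {g} \<tau> \<noteq> 0"
      by blast
    ultimately show ?thesis
      using cosheaf_chains_0_support[OF assms] by blast
  qed
  show ?thesis
    unfolding cosheaf_chains_iff
  proof (intro conjI allI impI)
    fix \<sigma> assume "contraction G M I w \<sigma> \<noteq> (\<lambda>_. 0)"
    then obtain \<tau> where "contraction G M I w \<sigma> \<tau> \<noteq> 0"
      by auto
    with support dowker_simplex_if_subset_deriv(1)[of \<sigma> \<tau> M G I]
    show "\<sigma> \<in> dowker G M I" "card \<sigma> = 1 + 1"
      by fastforce+
  next
    fix \<sigma> \<tau> assume "contraction G M I w \<sigma> \<tau> \<noteq> 0"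
    with support dowker_simplex_if_subset_deriv(2)[of \<sigma> \<tau> M G I]
    show "\<tau> \<in> full_simplex (deriv G M I \<sigma>)" "card \<tau> = k + 1"
      by fastforce+
  qed
qed

lemma cosheaf_bd_contraction_non_vertex:
  assumes "card \<sigma> \<noteq> 1"
  shows "cosheaf_bd G (contraction G M I w) \<sigma> \<tau> = 0"
proof -
  have "card (insert h \<sigma>) \<noteq> 2" if "h \<notin> \<sigma>" for h
    using assms that by (cases "finite \<sigma>") auto
  then show ?thesis
    unfolding cosheaf_bd_def contraction_def by (auto intro: sum.neutral)
qed

lemma cosheaf_bd_contraction_vertex:
  assumes "finite G" and w: "w \<in> cosheaf_chains G M I k 0" and "augmentation G w = (\<lambda>_. 0)"
  shows "cosheaf_bd G (contraction G M I w) {g} \<tau> = w {g} \<tau>"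
proof -
  define S where "S = deriv M G (converse I) \<tau>"
  have "S \<subseteq> G"
    unfolding S_def deriv_def by auto
  have w_outside: "w {h} \<tau> = 0" if "h \<notin> S" for h
    using cosheaf_chains_0_support[OF w, of "{h}" \<tau>] that unfolding S_def by auto
  have edge: "(-1) ^ card {x \<in> {g}. x < h} * contraction G M I w (insert h {g}) \<tau>
      = (if h \<in> S \<and> g \<in> S then (w {g} \<tau> - w {h} \<tau>) / card S else 0)" if "h \<noteq> g" for h
    using that unfolding card_less_singleton contraction_def S_def[symmetric]
    by (cases "g < h") (auto simp: max_def min_def diff_divide_distrib)
  show ?thesis
  proof (cases "g \<in> S")
    case False
    then show ?thesis
      using edge w_outside unfolding cosheaf_bd_def by simp
  next
    case True
    have "finite S"
      using \<open>S \<subseteq> G\<close> assms(1) by (rule finite_subset)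
    have "(\<Sum>h\<in>S. w {h} \<tau>) = (\<Sum>h\<in>G. w {h} \<tau>)"
      using \<open>S \<subseteq> G\<close> assms(1) w_outside by (intro sum.mono_neutral_left) auto
    also have "\<dots> = 0"
      using fun_cong[OF assms(3), of \<tau>] unfolding augmentation_def by simp
    finally have "(\<Sum>h\<in>S. w {h} \<tau>) = 0" .
    have "cosheaf_bd G (contraction G M I w) {g} \<tau>
        = (\<Sum>h\<in>G - {g}. if h \<in> S then (w {g} \<tau> - w {h} \<tau>) / card S else 0)"
      unfolding cosheaf_bd_def using True edge by (intro sum.cong) auto
    also have "\<dots> = (\<Sum>h\<in>S - {g}. (w {g} \<tau> - w {h} \<tau>) / card S)"
      using \<open>S \<subseteq> G\<close> assms(1) by (intro sum.mono_neutral_cong_right) auto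
    also have "\<dots> = w {g} \<tau>"
      by (rule sum_diff_average_eq) fact+
    finally show ?thesis .
  qed
qed

lemma cosheaf_bd_contraction:
  assumes "finite G" and "w \<in> cosheaf_chains G M I k 0" and "augmentation G w = (\<lambda>_. 0)"
  shows "cosheaf_bd G (contraction G M I w) = w"
proof (intro ext)
  fix \<sigma> \<tau>
  show "cosheaf_bd G (contraction G M I w) \<sigma> \<tau> = w \<sigma> \<tau>"
  proof (cases "card \<sigma> = 1")
    case True
    then obtain g where "\<sigma> = {g}"
      by (auto simp: card_1_singleton_iff)
    then show ?thesis
      using cosheaf_bd_contraction_vertex[OF assms] by simp
  next
    case False
    then show ?thesis
      using cosheaf_bd_contraction_non_vertex cosheaf_chains_0_support[OF assms(2), of \<sigma> \<tau>] by fastforce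
  qed
qed

lemma cosheaf_bd_image_if_augmentation_eq_0:
  assumes "finite G" and "w \<in> cosheaf_chains G M I k 0" and "augmentation G w = (\<lambda>_. 0)"
  shows "w \<in> cosheaf_bd G ` cosheaf_chains G M I k 1"
  using cosheaf_bd_contraction[OF assms] contraction_in_cosheaf_chains[OF assms(2)] by (metis image_eqI)

lemma zero_in_boundaries: "(\<lambda>_. 0) \<in> boundaries V K k"
proof -
  have "bd V (\<lambda>_. 0) = (\<lambda>_. 0)" and "(\<lambda>_. 0) \<in> chains K (k + 1)"
    unfolding bd_def chains_def by simp_all
  then show ?thesis
    unfolding boundaries_def by (metis image_eqI)
qed

lemma augmentation_in_cycles:
  assumes "finite G" and "z \<in> H0_cycles G M I k"
  shows "augmentation G z \<in> cycles M (dowker M G (converse I)) k"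
proof -
  from assms(2) have z: "z \<in> cosheaf_chains G M I k 0"
    and closed: "k = 0 \<or> cosheaf_d M z \<in> cosheaf_bd G ` cosheaf_chains G M I (k - 1) 1"
    unfolding H0_cycles_def by auto
  have "bd M (augmentation G z) = (\<lambda>_. 0)" if "k \<noteq> 0"
  proof -
    from that closed obtain a where "cosheaf_d M z = cosheaf_bd G a"
      by blast
    then show ?thesis
      by (metis augmentation_cosheaf_d augmentation_cosheaf_bd[OF assms(1)])
  qed
  with augmentation_in_chains[OF z] show ?thesis
    unfolding cycles_def by blast
qed

lemma augmentation_in_boundaries_iff:
  assumes "finite G" and "z \<in> H0_cycles G M I k"
  shows "augmentation G z \<in> boundaries M (dowker M G (converse I)) k \<longleftrightarrow> z \<in> H0_boundaries G M I k"
proof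
  assume "augmentation G z \<in> boundaries M (dowker M G (converse I)) k"
  then obtain c where c: "c \<in> chains (dowker M G (converse I)) (k + 1)"
    and "augmentation G z = bd M c"
    unfolding boundaries_def by auto
  define b where "b = lift_chain G M I c"
  have b: "b \<in> cosheaf_chains G M I (k + 1) 0"
    unfolding b_def using c by (rule lift_chain_in_cosheaf_chains)
  define w where "w = (\<lambda>\<sigma> \<rho>. z \<sigma> \<rho> - cosheaf_d M b \<sigma> \<rho>)"
  have "w \<in> cosheaf_chains G M I k 0"
    unfolding w_def using assms(2) cosheaf_d_in_cosheaf_chains[OF b]
    by (intro cosheaf_chains_diff) (auto simp: H0_cycles_def)
  moreover have "augmentation G w = (\<lambda>_. 0)"
    unfolding w_def augmentation_diff augmentation_cosheaf_d b_def
      augmentation_lift_chain[OF assms(1) c] \<open>augmentation G z = bd M c\<close> by simp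
  ultimately obtain a where "a \<in> cosheaf_chains G M I k 1" and "cosheaf_bd G a = w"
    using cosheaf_bd_image_if_augmentation_eq_0[OF assms(1)] by blast
  moreover have "z = (\<lambda>\<sigma> \<rho>. w \<sigma> \<rho> + cosheaf_d M b \<sigma> \<rho>)"
    unfolding w_def by simp
  ultimately show "z \<in> H0_boundaries G M I k"
    unfolding H0_boundaries_def using b by blast
next
  assume "z \<in> H0_boundaries G M I k"
  then obtain a b where z: "z = (\<lambda>\<sigma> \<rho>. cosheaf_bd G a \<sigma> \<rho> + cosheaf_d M b \<sigma> \<rho>)"
    and b: "b \<in> cosheaf_chains G M I (k + 1) 0"
    unfolding H0_boundaries_def by blast
  have "augmentation G z = bd M (augmentation G b)"
    unfolding z augmentation_add augmentation_cosheaf_bd[OF assms(1)] augmentation_cosheaf_d by simp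
  with augmentation_in_chains[OF b] show "augmentation G z \<in> boundaries M (dowker M G (converse I)) k"
    unfolding boundaries_def by blast
qed

lemma lift_chain_in_H0_cycles:
  assumes "finite G" and "c \<in> cycles M (dowker M G (converse I)) k"
  shows "lift_chain G M I c \<in> H0_cycles G M I k"
proof -
  from assms(2) have c: "c \<in> chains (dowker M G (converse I)) k"
    and cycle: "k = 0 \<or> bd M c = (\<lambda>_. 0)"
    unfolding cycles_def by auto
  have z: "lift_chain G M I c \<in> cosheaf_chains G M I k 0"
    using c by (rule lift_chain_in_cosheaf_chains)
  have "cosheaf_d M (lift_chain G M I c) \<in> cosheaf_bd G ` cosheaf_chains G M I (k - 1) 1" if "k \<noteq> 0"
  proof (rule cosheaf_bd_image_if_augmentation_eq_0[OF assms(1)])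
    show "cosheaf_d M (lift_chain G M I c) \<in> cosheaf_chains G M I (k - 1) 0"
      using z that by (intro cosheaf_d_in_cosheaf_chains) simp
    show "augmentation G (cosheaf_d M (lift_chain G M I c)) = (\<lambda>_. 0)"
      using cycle that by (simp add: augmentation_cosheaf_d augmentation_lift_chain[OF assms(1) c])
  qed
  with z show ?thesis
    unfolding H0_cycles_def by auto
qed

theorem mainTheorem7:
  fixes G :: "'g::linorder set" and M :: "'m::linorder set" and I :: "('g \<times> 'm) set"
  assumes "finite G" and "finite M" and "I \<subseteq> G \<times> M"
  shows "subquot_iso (H0_cycles G M I k) (H0_boundaries G M I k)
           (cycles M (dowker M G (converse I)) k) (boundaries M (dowker M G (converse I)) k)"
proof -
  have "\<exists>z\<in>H0_cycles G M I k. (\<lambda>\<rho>. augmentation G z \<rho> - c \<rho>) \<in> boundaries M (dowker M G (converse I)) k"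
    if "c \<in> cycles M (dowker M G (converse I)) k" for c
  proof
    show "lift_chain G M I c \<in> H0_cycles G M I k"
      using assms(1) that by (rule lift_chain_in_H0_cycles)
    have "c \<in> chains (dowker M G (converse I)) k"
      using that unfolding cycles_def by simp
    then have "augmentation G (lift_chain G M I c) = c"
      by (rule augmentation_lift_chain[OF assms(1)])
    then show "(\<lambda>\<rho>. augmentation G (lift_chain G M I c) \<rho> - c \<rho>) \<in> boundaries M (dowker M G (converse I)) k"
      using zero_in_boundaries by simp
  qed
  then show ?thesis
    unfolding subquot_iso_def
    using augmentation_add augmentation_scale augmentation_in_cycles[OF assms(1)]
      augmentation_in_boundaries_iff[OF assms(1)]
    by (intro exI[of _ "augmentation G"]) blast
qed

end
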